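(* Let indices range over $\{1,\dots,5\}$. Let real numbers $\alpha^{ab}_i$ be given for all pairwise distinct $a,b,i$. Let nonnegative numbers $k^a_{ij}=k^a_{ji}$ be given for pairwise distinct $a,i,j$, and numbers $j_{ai}=j_{ia}$ for $a\ne i$, such that $$\sum_{j\notin\{a,i\}}k^a_{ij}=2j_{ai}.$$ Define $$\alpha^{ai}_{jk}=\alpha^{ai}_j-\alpha^{ai}_k,\qquad \xi^{ab}_i=\alpha^{ab}_i+\alpha^{ba}_i,\qquad \xi^{ij}=\frac13\sum_{k\notin\{i,j\}}\xi^{ij}_k,\qquad \alpha^a_{ij}=\frac16\sum_{b\notin\{i,j,a\}}\big(\alpha^{ai}_{jb}+\alpha^{aj}_{ib}\big),$$ and let $$I=\frac12\sum_{a}\sum_{\substack{i<j\\ i,j\ne a}}k^a_{ij}\big(\alpha^{aj}_i+\alpha^{ai}_j\big)$$ be the imaginary part of the on-shell action. Then $I$ equals the twisted-geometry generalization of the Regge action: $$I=S_{\mathbb T}:=\sum_{i<j}j_{ij}\,\xi^{ij}+\sum_a\sum_{\substack{i<j\\ i,j\ne a}}k^a_{ij}\,\alpha^a_{ij}.$$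
   Context: Geometric interpretation (not needed for the identity): $a=1,\dots,5$ label the tetrahedra of a 4-simplex, and face $(ai)$ of tetrahedron $a$ is glued to face $(ia)$ of tetrahedron $i$. The number $2j_{ai}$ is the area of that shared triangle. The integers $k^a_{ij}$ label the discrete intertwiner at tetrahedron $a$. The angle $\alpha^{ab}_i$ is the angle, in face $b$ of tetrahedron $a$, between the edge $(bi)$ and a reference frame vector. The on-shell value of the action governing the large-spin asymptotics of the 4-simplex amplitude has imaginary part $I$. *)

theory Defs
  imports Complex_Main
begin

text \<open>Indices range over {1..5}. alpha a b i stands for alpha^{ab}_i,
  k a i j for k^a_{ij}, jj a i for j_{ai}.\<close>

definition Idx :: "nat set" where "Idx = {1..5}"

definition alpha2 :: "(nat \<Rightarrow> nat \<Rightarrow> nat \<Rightarrow> real) \<Rightarrow> nat \<Rightarrow> nat \<Rightarrow> nat \<Rightarrow> nat \<Rightarrow> real" where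
  "alpha2 \<alpha> a i j k = \<alpha> a i j - \<alpha> a i k"

definition xi3 :: "(nat \<Rightarrow> nat \<Rightarrow> nat \<Rightarrow> real) \<Rightarrow> nat \<Rightarrow> nat \<Rightarrow> nat \<Rightarrow> real" where
  "xi3 \<alpha> a b i = \<alpha> a b i + \<alpha> b a i"

definition xi2 :: "(nat \<Rightarrow> nat \<Rightarrow> nat \<Rightarrow> real) \<Rightarrow> nat \<Rightarrow> nat \<Rightarrow> real" where
  "xi2 \<alpha> i j = (1/3) * (\<Sum>k\<in>Idx - {i, j}. xi3 \<alpha> i j k)"

definition alphaA :: "(nat \<Rightarrow> nat \<Rightarrow> nat \<Rightarrow> real) \<Rightarrow> nat \<Rightarrow> nat \<Rightarrow> nat \<Rightarrow> real" where
  "alphaA \<alpha> a i j = (1/6) * (\<Sum>b\<in>Idx - {i, j, a}. alpha2 \<alpha> a i j b + alpha2 \<alpha> a j i b)"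

definition ImAction :: "(nat \<Rightarrow> nat \<Rightarrow> nat \<Rightarrow> real) \<Rightarrow> (nat \<Rightarrow> nat \<Rightarrow> nat \<Rightarrow> real) \<Rightarrow> real" where
  "ImAction \<alpha> k = (1/2) * (\<Sum>a\<in>Idx. \<Sum>(i,j)\<in>{(i,j). i \<in> Idx \<and> j \<in> Idx \<and> i < j \<and> i \<noteq> a \<and> j \<noteq> a}.
      k a i j * (\<alpha> a j i + \<alpha> a i j))"

definition ReggeTwisted :: "(nat \<Rightarrow> nat \<Rightarrow> nat \<Rightarrow> real) \<Rightarrow> (nat \<Rightarrow> nat \<Rightarrow> nat \<Rightarrow> real) \<Rightarrow> (nat \<Rightarrow> nat \<Rightarrow> real) \<Rightarrow> real" where
  "ReggeTwisted \<alpha> k jj =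
     (\<Sum>(i,j)\<in>{(i,j). i \<in> Idx \<and> j \<in> Idx \<and> i < j}. jj i j * xi2 \<alpha> i j)
   + (\<Sum>a\<in>Idx. \<Sum>(i,j)\<in>{(i,j). i \<in> Idx \<and> j \<in> Idx \<and> i < j \<and> i \<noteq> a \<and> j \<noteq> a}.
        k a i j * alphaA \<alpha> a i j)"

end

theory Submission
  imports Defs
begin

text \<open>Put \<open>A(a,i) = \<Sum> \<alpha>(a,i,b)\<close> over \<open>b \<notin> {a, i}\<close> (\<open>alpha_sum\<close>). A sum over \<open>i < j\<close> of
  \<open>h(i,j) + h(j,i)\<close> is the sum of \<open>h\<close> over ordered pairs; in this form the edge term of the
  twisted Regge action is \<open>\<Sum> j(a,i) A(a,i) / 3\<close>. With five indices, \<open>k(a,i,j) \<alpha>\<^sup>a(i,j)\<close>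
  is the symmetrization of \<open>k(a,i,j) (3 \<alpha>(a,i,j) - A(a,i)) / 6\<close>, so the intertwiner term is
  \<open>I - \<Sum> (\<Sum>\<^sub>j k(a,i,j)) A(a,i) / 6\<close>. The closure relation \<open>\<Sum>\<^sub>j k(a,i,j) = 2 j(a,i)\<close> makes
  the two \<open>A\<close>-sums cancel.\<close>

lemma sum_less_pairs_symmetrize:
  fixes h :: "'a::linorder \<Rightarrow> 'a \<Rightarrow> 'b::comm_monoid_add"
  assumes "finite I"
  shows "(\<Sum>(i,j)\<in>{(i,j). i \<in> I \<and> j \<in> I \<and> i < j}. h i j + h j i) = (\<Sum>i\<in>I. \<Sum>j\<in>I - {i}. h i j)"
proof -
  let ?P = "{(i,j). i \<in> I \<and> j \<in> I \<and> i < j}"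
  have fin: "finite ?P"
    by (rule finite_subset[of _ "I \<times> I"]) (use assms in auto)
  have offdiag: "Sigma I (\<lambda>i. I - {i}) = ?P \<union> prod.swap ` ?P"
    by (auto simp: image_iff neq_iff)
  have disj: "?P \<inter> prod.swap ` ?P = {}"
    by auto
  have "(\<Sum>i\<in>I. \<Sum>j\<in>I - {i}. h i j) = (\<Sum>(i,j)\<in>?P \<union> prod.swap ` ?P. h i j)"
    using assms by (simp add: sum.Sigma offdiag[symmetric])
  also have "\<dots> = (\<Sum>(i,j)\<in>?P. h i j) + (\<Sum>(i,j)\<in>prod.swap ` ?P. h i j)"
    using fin disj by (simp add: sum.union_disjoint)
  also have "(\<Sum>(i,j)\<in>prod.swap ` ?P. h i j) = (\<Sum>(i,j)\<in>?P. h j i)"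
    by (simp add: sum.reindex case_prod_beta)
  finally show ?thesis
    by (simp add: sum.distrib[symmetric] split_def)
qed

definition alpha_sum :: "(nat \<Rightarrow> nat \<Rightarrow> nat \<Rightarrow> real) \<Rightarrow> nat \<Rightarrow> nat \<Rightarrow> real" where
  "alpha_sum \<alpha> a i = (\<Sum>b\<in>Idx - {a, i}. \<alpha> a i b)"

lemma ImAction_eq_ordered_sum:
  assumes k_sym: "\<And>a i j. a \<in> Idx \<Longrightarrow> i \<in> Idx \<Longrightarrow> j \<in> Idx \<Longrightarrow> a \<noteq> i \<Longrightarrow> a \<noteq> j \<Longrightarrow> i \<noteq> j
                     \<Longrightarrow> k a i j = k a j i"
  shows "ImAction \<alpha> k = (\<Sum>a\<in>Idx. \<Sum>i\<in>Idx - {a}. \<Sum>j\<in>Idx - {a, i}. k a i j * \<alpha> a i j) / 2"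
proof -
  have "(\<Sum>(i,j)\<in>{(i,j). i \<in> Idx \<and> j \<in> Idx \<and> i < j \<and> i \<noteq> a \<and> j \<noteq> a}. k a i j * (\<alpha> a j i + \<alpha> a i j))
      = (\<Sum>i\<in>Idx - {a}. \<Sum>j\<in>Idx - {a, i}. k a i j * \<alpha> a i j)" if "a \<in> Idx" for a
  proof -
    have "(\<Sum>(i,j)\<in>{(i,j). i \<in> Idx \<and> j \<in> Idx \<and> i < j \<and> i \<noteq> a \<and> j \<noteq> a}. k a i j * (\<alpha> a j i + \<alpha> a i j))
        = (\<Sum>(i,j)\<in>{(i,j). i \<in> Idx - {a} \<and> j \<in> Idx - {a} \<and> i < j}. k a i j * \<alpha> a i j + k a j i * \<alpha> a j i)"
      by (intro sum.cong) (auto simp: k_sym[OF \<open>a \<in> Idx\<close>] algebra_simps)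
    also have "\<dots> = (\<Sum>i\<in>Idx - {a}. \<Sum>j\<in>Idx - {a} - {i}. k a i j * \<alpha> a i j)"
      by (rule sum_less_pairs_symmetrize) (simp add: Idx_def)
    finally show ?thesis
      by (simp add: insert_commute Diff_insert2[symmetric])
  qed
  then show ?thesis
    unfolding ImAction_def by simp
qed

lemma edge_term_eq_ordered_sum:
  assumes j_sym: "\<And>a i. a \<in> Idx \<Longrightarrow> i \<in> Idx \<Longrightarrow> a \<noteq> i \<Longrightarrow> jj a i = jj i a"
  shows "(\<Sum>(i,j)\<in>{(i,j). i \<in> Idx \<and> j \<in> Idx \<and> i < j}. jj i j * xi2 \<alpha> i j)
       = (\<Sum>a\<in>Idx. \<Sum>i\<in>Idx - {a}. jj a i * alpha_sum \<alpha> a i) / 3"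
proof -
  have "(\<Sum>(i,j)\<in>{(i,j). i \<in> Idx \<and> j \<in> Idx \<and> i < j}. jj i j * xi2 \<alpha> i j)
      = (\<Sum>(i,j)\<in>{(i,j). i \<in> Idx \<and> j \<in> Idx \<and> i < j}.
           jj i j * alpha_sum \<alpha> i j / 3 + jj j i * alpha_sum \<alpha> j i / 3)"
    by (intro sum.cong) (auto simp: xi2_def xi3_def alpha_sum_def sum.distrib j_sym insert_commute field_simps)
  also have "\<dots> = (\<Sum>a\<in>Idx. \<Sum>i\<in>Idx - {a}. jj a i * alpha_sum \<alpha> a i / 3)"
    by (rule sum_less_pairs_symmetrize) (simp add: Idx_def)
  finally show ?thesis
    by (simp add: sum_divide_distrib)
qed

lemma sum_alpha2_complement:
  assumes "a \<in> Idx" "i \<in> Idx" "j \<in> Idx" "a \<noteq> i" "a \<noteq> j" "i \<noteq> j"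
  shows "(\<Sum>b\<in>Idx - {i, j, a}. alpha2 \<alpha> a i j b) = 3 * \<alpha> a i j - alpha_sum \<alpha> a i"
proof -
  have fin: "finite (Idx - {a, i})"
    by (simp add: Idx_def)
  have split: "Idx - {a, i} = insert j (Idx - {i, j, a})"
    using assms by auto
  have card: "card (Idx - {i, j, a}) = 2"
    using assms by (simp add: Idx_def card_Diff_subset_Int)
  have "alpha_sum \<alpha> a i = \<alpha> a i j + (\<Sum>b\<in>Idx - {i, j, a}. \<alpha> a i b)"
    using fin by (simp add: alpha_sum_def split)
  then show ?thesis
    by (simp add: alpha2_def sum_subtractf card)
qed

lemma intertwiner_term_eq:
  assumes k_sym: "\<And>a i j. a \<in> Idx \<Longrightarrow> i \<in> Idx \<Longrightarrow> j \<in> Idx \<Longrightarrow> a \<noteq> i \<Longrightarrow> a \<noteq> j \<Longrightarrow> i \<noteq> j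
                     \<Longrightarrow> k a i j = k a j i"
  shows "(\<Sum>a\<in>Idx. \<Sum>(i,j)\<in>{(i,j). i \<in> Idx \<and> j \<in> Idx \<and> i < j \<and> i \<noteq> a \<and> j \<noteq> a}. k a i j * alphaA \<alpha> a i j)
       = ImAction \<alpha> k
         - (\<Sum>a\<in>Idx. \<Sum>i\<in>Idx - {a}. (\<Sum>j\<in>Idx - {a, i}. k a i j) * alpha_sum \<alpha> a i) / 6"
proof -
  define h where "h a i j = k a i j * (3 * \<alpha> a i j - alpha_sum \<alpha> a i) / 6" for a i j
  have "(\<Sum>(i,j)\<in>{(i,j). i \<in> Idx \<and> j \<in> Idx \<and> i < j \<and> i \<noteq> a \<and> j \<noteq> a}. k a i j * alphaA \<alpha> a i j)
      = (\<Sum>i\<in>Idx - {a}. \<Sum>j\<in>Idx - {a, i}. h a i j)" if "a \<in> Idx" for a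
  proof -
    have pointwise: "k a i j * alphaA \<alpha> a i j = h a i j + h a j i"
      if ij: "i \<in> Idx" "j \<in> Idx" "i \<noteq> j" "i \<noteq> a" "j \<noteq> a" for i j
    proof -
      have "Idx - {j, i, a} = Idx - {i, j, a}"
        by auto
      then have alphaA_eq: "alphaA \<alpha> a i j = ((3 * \<alpha> a i j - alpha_sum \<alpha> a i) + (3 * \<alpha> a j i - alpha_sum \<alpha> a j)) / 6"
        using ij \<open>a \<in> Idx\<close> sum_alpha2_complement[of a i j \<alpha>] sum_alpha2_complement[of a j i \<alpha>]
        by (simp add: alphaA_def sum.distrib alpha_sum_def)
      show ?thesis
        using ij \<open>a \<in> Idx\<close> by (simp add: alphaA_eq h_def k_sym[of a j i] field_simps)
    qed
    have "(\<Sum>(i,j)\<in>{(i,j). i \<in> Idx \<and> j \<in> Idx \<and> i < j \<and> i \<noteq> a \<and> j \<noteq> a}. k a i j * alphaA \<alpha> a i j)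
        = (\<Sum>(i,j)\<in>{(i,j). i \<in> Idx - {a} \<and> j \<in> Idx - {a} \<and> i < j}. h a i j + h a j i)"
      by (intro sum.cong) (auto simp: pointwise)
    also have "\<dots> = (\<Sum>i\<in>Idx - {a}. \<Sum>j\<in>Idx - {a} - {i}. h a i j)"
      by (rule sum_less_pairs_symmetrize) (simp add: Idx_def)
    finally show ?thesis
      by (simp add: insert_commute Diff_insert2[symmetric])
  qed
  moreover have "(\<Sum>j\<in>Idx - {a, i}. h a i j)
      = (\<Sum>j\<in>Idx - {a, i}. k a i j * \<alpha> a i j) / 2 - (\<Sum>j\<in>Idx - {a, i}. k a i j) * alpha_sum \<alpha> a i / 6" for a i
  proof -
    have "h a i j = k a i j * \<alpha> a i j / 2 - k a i j * alpha_sum \<alpha> a i / 6" for j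
      by (simp add: h_def field_simps)
    then show ?thesis
      by (simp add: sum_subtractf sum_divide_distrib[symmetric] sum_distrib_right)
  qed
  ultimately show ?thesis
    by (simp add: ImAction_eq_ordered_sum[OF k_sym] sum_subtractf sum_divide_distrib)
qed

theorem mainTheorem14:
  fixes \<alpha> :: "nat \<Rightarrow> nat \<Rightarrow> nat \<Rightarrow> real"
    and k :: "nat \<Rightarrow> nat \<Rightarrow> nat \<Rightarrow> real"
    and jj :: "nat \<Rightarrow> nat \<Rightarrow> real"
  assumes k_sym: "\<And>a i j. a \<in> Idx \<Longrightarrow> i \<in> Idx \<Longrightarrow> j \<in> Idx \<Longrightarrow> a \<noteq> i \<Longrightarrow> a \<noteq> j \<Longrightarrow> i \<noteq> j
                     \<Longrightarrow> k a i j = k a j i"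
    and k_nonneg: "\<And>a i j. a \<in> Idx \<Longrightarrow> i \<in> Idx \<Longrightarrow> j \<in> Idx \<Longrightarrow> a \<noteq> i \<Longrightarrow> a \<noteq> j \<Longrightarrow> i \<noteq> j
                     \<Longrightarrow> 0 \<le> k a i j"
    and j_sym: "\<And>a i. a \<in> Idx \<Longrightarrow> i \<in> Idx \<Longrightarrow> a \<noteq> i \<Longrightarrow> jj a i = jj i a"
    and closure: "\<And>a i. a \<in> Idx \<Longrightarrow> i \<in> Idx \<Longrightarrow> a \<noteq> i
                     \<Longrightarrow> (\<Sum>j\<in>Idx - {a, i}. k a i j) = 2 * jj a i"
  shows "ImAction \<alpha> k = ReggeTwisted \<alpha> k jj"
proof -
  let ?S = "\<Sum>a\<in>Idx. \<Sum>i\<in>Idx - {a}. jj a i * alpha_sum \<alpha> a i"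
  have "(\<Sum>a\<in>Idx. \<Sum>i\<in>Idx - {a}. (\<Sum>j\<in>Idx - {a, i}. k a i j) * alpha_sum \<alpha> a i) = 2 * ?S"
    by (simp add: closure sum_distrib_left mult.assoc)
  then have "ReggeTwisted \<alpha> k jj = ?S / 3 + (ImAction \<alpha> k - 2 * ?S / 6)"
    unfolding ReggeTwisted_def
    by (simp add: edge_term_eq_ordered_sum[OF j_sym] intertwiner_term_eq[OF k_sym])
  then show ?thesis
    by simp
qed

end
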